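(* Let $M$ be a finite-horizon reward-free MDP, $\Pi\subseteq\Pi_{\mathrm{RNS}}$, and $h\in[H]$. For all $\varepsilon>0$, $\mathsf{Cov}^M_{h,\varepsilon}\le C^M_{\infty;h}$.
   Context: Episodic reward-free MDP $M$ with countable state space $\mathcal{X}$, action space $\mathcal{A}$, horizon $H$; $\Pi_{\mathrm{RNS}}$ is the set of randomized non-stationary policies $\pi=(\pi_h)_{h\le H}$, $\pi_h:\mathcal{X}\to\Delta(\mathcal{A})$. $d^{M,\pi}_h(x,a)$ is the probability that $(x_h,a_h)=(x,a)$ when running $\pi$ in $M$; for $p\in\Delta(\Pi_{\mathrm{RNS}})$, $d^{M,p}_h=\mathbb{E}_{\pi\sim p}d^{M,\pi}_h$. Define $\Psi^M_{h,\varepsilon}(p)=\sup_{\pi\in\Pi}\mathbb{E}^{M,\pi}\big[\frac{d^{M,\pi}_h(x_h,a_h)}{d^{M,p}_h(x_h,a_h)+\varepsilon d^{M,\pi}_h(x_h,a_h)}\big]$, the $L_1$-Coverability $\mathsf{Cov}^M_{h,\varepsilon}=\inf_{p\in\Delta(\Pi)}\Psi^M_{h,\varepsilon}(p)$, and the $L_\infty$-Coverability $C^M_{\infty;h}=\inf_{\mu\in\Delta(\mathcal{X}\times\mathcal{A})}\sup_{\pi\in\Pi}\sup_{(x,a)}\frac{d^{M,\pi}_h(x,a)}{\mu(x,a)}$. *)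

theory Defs
  imports "HOL-Probability.Probability"
begin

text \<open>Episodic reward-free MDP with countable state space: an initial state
distribution (distribution of x_1) and step-dependent transition kernels;
trans M h x a is the law of x_{h+1} given (x_h, a_h) = (x, a).  Steps are 1-indexed.\<close>

record ('x, 'a) mdp =
  init :: "'x pmf"
  trans :: "nat \<Rightarrow> 'x \<Rightarrow> 'a \<Rightarrow> 'x pmf"

type_synonym ('x, 'a) policy = "nat \<Rightarrow> 'x \<Rightarrow> 'a pmf"

text \<open>state_dist M pol n is the law of x_{n+1} when running pol in M.\<close>
primrec state_dist :: "('x, 'a) mdp \<Rightarrow> ('x, 'a) policy \<Rightarrow> nat \<Rightarrow> 'x pmf" where
  "state_dist M pol 0 = init M"
| "state_dist M pol (Suc n) =
     bind_pmf (state_dist M pol n) (\<lambda>x. bind_pmf (pol (Suc n) x) (\<lambda>a. trans M (Suc n) x a))"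

text \<open>Occupancy law of (x_h, a_h), for h \<ge> 1.\<close>
definition occ :: "('x, 'a) mdp \<Rightarrow> ('x, 'a) policy \<Rightarrow> nat \<Rightarrow> ('x \<times> 'a) pmf" where
  "occ M pol h = bind_pmf (state_dist M pol (h - 1)) (\<lambda>x. map_pmf (\<lambda>a. (x, a)) (pol h x))"

definition occd :: "('x, 'a) mdp \<Rightarrow> ('x, 'a) policy \<Rightarrow> nat \<Rightarrow> 'x \<times> 'a \<Rightarrow> real" where
  "occd M pol h z = pmf (occ M pol h) z"

definition occd_mix :: "('x, 'a) mdp \<Rightarrow> ('x, 'a) policy pmf \<Rightarrow> nat \<Rightarrow> 'x \<times> 'a \<Rightarrow> real" where
  "occd_mix M p h z = measure_pmf.expectation p (\<lambda>pol. occd M pol h z)"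

definition Psi :: "('x, 'a) mdp \<Rightarrow> ('x, 'a) policy set \<Rightarrow> nat \<Rightarrow> real \<Rightarrow> ('x, 'a) policy pmf \<Rightarrow> ennreal" where
  "Psi M Pis h eps p = (SUP pol\<in>Pis. \<integral>\<^sup>+ z. ennreal (occd M pol h z / (occd_mix M p h z + eps * occd M pol h z))
                                      \<partial>measure_pmf (occ M pol h))"

definition Cov :: "('x, 'a) mdp \<Rightarrow> ('x, 'a) policy set \<Rightarrow> nat \<Rightarrow> real \<Rightarrow> ennreal" where
  "Cov M Pis h eps = (INF p\<in>{p :: ('x, 'a) policy pmf. set_pmf p \<subseteq> Pis}. Psi M Pis h eps p)"

text \<open>L_infinity-coverability (ratio in ennreal: c/0 = \<infinity> for c>0, 0/0 = 0).\<close>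
definition Cinf :: "('x, 'a) mdp \<Rightarrow> ('x, 'a) policy set \<Rightarrow> nat \<Rightarrow> ennreal" where
  "Cinf M Pis h = (INF mu\<in>(UNIV :: ('x \<times> 'a) pmf set). SUP pol\<in>Pis. SUP z.
                     ennreal (occd M pol h z) / ennreal (pmf mu z))"

end

theory Submission
  imports Defs
begin

(* Fix mu with d^pi <= C mu for every pi in Pis.  The occupancies d^p of mixtures p form a convex
   set, and a near-maximiser p of the concave potential sum_z mu(z) ln d^p(z) satisfies the
   first-order condition sum_z mu(z) d^pi(z) / d^p(z) <~ 1 for every pi.  Hence
   sum_z d^pi(z)^2 / d^p(z) <= C sum_z mu(z) d^pi(z) / d^p(z) <~ C, which bounds Psi(p).
   To make this rigorous the potential is regularised by gam > 0 and restricted to a finite set S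
   carrying almost all the mass of mu; the term eps d^pi in the denominator of Psi absorbs both
   the regularisation and the tail of mu outside S. *)

lemma ln_diff_ge_divide:
  fixes a b :: real
  assumes "0 < a" "0 < b"
  shows "(b - a) / b \<le> ln b - ln a"
proof -
  have "ln (a / b) \<le> a / b - 1" using assms by (intro ln_le_minus_one) auto
  then show ?thesis using assms by (simp add: ln_div diff_divide_distrib)
qed

lemma regularised_ratio_le:
  fixes v w t eps gam :: real
  assumes "0 \<le> v" "0 \<le> w" "0 < t" "t \<le> 1" "t \<le> eps" "0 < gam"
  shows "w * (w / (v + eps * w)) \<le> w * w / ((1 - t) * v + t * w + gam) + gam / eps\<^sup>2"
proof (cases "w = 0")
  case True
  then show ?thesis using assms by simp
next
  case False
  with assms have "0 < w" "0 < eps" by auto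
  define a where "a = v + eps * w"
  have "eps * w \<le> a" using assms unfolding a_def by simp
  moreover have "0 < eps * w" using \<open>0 < w\<close> \<open>0 < eps\<close> by simp
  ultimately have "0 < a" by linarith
  have "w * (w / a) - w * w / (a + gam) = w * w * gam / (a * (a + gam))"
    using \<open>0 < a\<close> assms by (simp add: field_simps)
  also have "\<dots> \<le> w * w * gam / ((eps * w) * (eps * w))"
  proof (rule divide_left_mono)
    show "eps * w * (eps * w) \<le> a * (a + gam)"
      using \<open>0 < eps * w\<close> \<open>eps * w \<le> a\<close> assms by (intro mult_mono) auto
    show "0 < a * (a + gam) * (eps * w * (eps * w))"
      using \<open>0 < a\<close> \<open>0 < eps * w\<close> assms by simp
  qed (use assms in simp)
  also have "\<dots> = gam / eps\<^sup>2"
    using \<open>0 < w\<close> by (simp add: power2_eq_square)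
  finally have "w * (w / a) \<le> w * w / (a + gam) + gam / eps\<^sup>2" by simp
  moreover have "w * w / (a + gam) \<le> w * w / ((1 - t) * v + t * w + gam)"
  proof (rule divide_left_mono)
    have "(1 - t) * v \<le> v" "t * w \<le> eps * w"
      using assms by (auto intro: mult_left_le_one_le mult_right_mono)
    then show "(1 - t) * v + t * w + gam \<le> a + gam" unfolding a_def by simp
    have "0 < (1 - t) * v + t * w + gam" using assms by (simp add: add_nonneg_pos)
    then show "0 < (a + gam) * ((1 - t) * v + t * w + gam)"
      using \<open>0 < a\<close> assms by simp
  qed simp
  ultimately show ?thesis unfolding a_def by simp
qed

lemma ratio_le_divide_eps:
  fixes v w eps :: real
  assumes "0 \<le> v" "0 \<le> w" "0 < eps"
  shows "w * (w / (v + eps * w)) \<le> w / eps"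
proof (cases "w = 0")
  case False
  with assms have "0 < v + eps * w" by (simp add: add_nonneg_pos)
  moreover have "w * w * eps \<le> w * (v + eps * w)"
    using assms by (simp add: algebra_simps)
  ultimately show ?thesis
    using assms by (simp add: field_simps)
qed simp

lemma mult_divide_add_one_le:
  fixes a x :: real
  assumes "0 \<le> a" "0 \<le> x"
  shows "a * (x / (a + 1)) \<le> x"
proof -
  have "a / (a + 1) \<le> 1" using assms by simp
  then have "x * (a / (a + 1)) \<le> x" using assms(2) by (rule mult_left_le)
  then show ?thesis by (simp add: mult.commute)
qed

lemma le_mult_of_ennreal_divide_le:
  fixes a b c :: real
  assumes "ennreal a / ennreal b \<le> ennreal c" "0 \<le> a" "0 \<le> b" "0 \<le> c"
  shows "a \<le> c * b"
proof (cases "b = 0")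
  case True
  with assms show ?thesis by (auto split: if_splits simp: top_unique)
next
  case False
  with assms have "ennreal (a / b) \<le> ennreal c" by (simp add: divide_ennreal)
  then have "a / b \<le> c" using assms(4) by simp
  with False assms(3) show ?thesis by (simp add: divide_le_eq)
qed

lemma measure_pmf_finite_tail_le:
  fixes mu :: "'z pmf"
  assumes "0 < eta"
  obtains S where "finite S" "measure_pmf.prob mu (UNIV - S) \<le> eta"
proof -
  define A where "A n = from_nat_into (set_pmf mu) ` {..<n}" for n
  have "decseq (\<lambda>n. UNIV - A n)" unfolding A_def decseq_def by auto
  moreover have "(\<Inter>n. UNIV - A n) = UNIV - set_pmf mu"
    using range_from_nat_into[OF set_pmf_not_empty countable_set_pmf, of mu]
    unfolding A_def by (auto simp: image_iff)
  moreover have "measure_pmf.prob mu (UNIV - set_pmf mu) = 0"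
    by (simp add: measure_pmf_zero_iff)
  ultimately have "(\<lambda>n. measure_pmf.prob mu (UNIV - A n)) \<longlonglongrightarrow> 0"
    using measure_pmf.finite_Lim_measure_decseq[of "\<lambda>n. UNIV - A n" mu] by simp
  then have "eventually (\<lambda>n. measure_pmf.prob mu (UNIV - A n) < eta) sequentially"
    using assms by (rule order_tendstoD)
  then obtain n where "measure_pmf.prob mu (UNIV - A n) < eta"
    by (auto simp: eventually_sequentially)
  then show ?thesis using that[of "A n"] unfolding A_def by auto
qed

definition mix_pmf :: "real \<Rightarrow> 'a pmf \<Rightarrow> 'a pmf \<Rightarrow> 'a pmf" where
  "mix_pmf t p q = bind_pmf (bernoulli_pmf t) (\<lambda>b. if b then q else p)"

lemma set_mix_pmf: "set_pmf (mix_pmf t p q) \<subseteq> set_pmf p \<union> set_pmf q"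
  by (auto simp: mix_pmf_def split: if_splits)

definition log_potential :: "'z pmf \<Rightarrow> 'z set \<Rightarrow> real \<Rightarrow> ('z \<Rightarrow> real) \<Rightarrow> real" where
  "log_potential mu S gam v = (\<Sum>z\<in>S. pmf mu z * ln (v z + gam))"

lemma log_potential_first_order:
  fixes v w :: "'z \<Rightarrow> real"
  assumes "finite S" "0 < gam" "0 < t" "t < 1"
    and v_nonneg: "\<And>z. 0 \<le> v z" and w_nonneg: "\<And>z. 0 \<le> w z"
    and opt: "log_potential mu S gam (\<lambda>z. (1 - t) * v z + t * w z) \<le> log_potential mu S gam v + del"
  shows "(\<Sum>z\<in>S. pmf mu z * w z / ((1 - t) * v z + t * w z + gam)) \<le> del / t + 1 / (1 - t)"
proof -
  define u where "u z = (1 - t) * v z + t * w z + gam" for z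
  have u_pos: "0 < u z" for z
    using assms(2-4) v_nonneg[of z] w_nonneg[of z] unfolding u_def by (simp add: add_nonneg_pos)
  have "t * ((\<Sum>z\<in>S. pmf mu z * w z / u z) - (\<Sum>z\<in>S. pmf mu z * v z / u z))
      = (\<Sum>z\<in>S. pmf mu z * ((u z - (v z + gam)) / u z))"
    unfolding sum_subtractf[symmetric] sum_distrib_left
    by (intro sum.cong refl) (simp add: u_def algebra_simps diff_divide_distrib)
  also have "\<dots> \<le> (\<Sum>z\<in>S. pmf mu z * (ln (u z) - ln (v z + gam)))"
    using u_pos assms(2) v_nonneg by (intro sum_mono mult_left_mono ln_diff_ge_divide) (auto intro: add_nonneg_pos)
  also have "\<dots> \<le> del"
    using opt by (simp add: log_potential_def u_def right_diff_distrib sum_subtractf)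
  finally have "(\<Sum>z\<in>S. pmf mu z * w z / u z) \<le> del / t + (\<Sum>z\<in>S. pmf mu z * v z / u z)"
    using assms(3) by (simp add: field_simps)
  also have "(\<Sum>z\<in>S. pmf mu z * v z / u z) \<le> (\<Sum>z\<in>S. pmf mu z / (1 - t))"
  proof (intro sum_mono)
    fix z
    have "(1 - t) * v z \<le> u z" using assms(2,3) w_nonneg[of z] unfolding u_def by simp
    then have "v z / u z \<le> 1 / (1 - t)"
      using u_pos[of z] assms(4) by (simp add: field_simps)
    then show "pmf mu z * v z / u z \<le> pmf mu z / (1 - t)"
      using mult_left_mono[OF _ pmf_nonneg] by fastforce
  qed
  also have "\<dots> \<le> 1 / (1 - t)"
    using assms(1,4) by (simp add: sum_divide_distrib[symmetric] measure_measure_pmf_finite[symmetric] divide_right_mono)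
  finally show ?thesis unfolding u_def by simp
qed

lemma log_potential_near_maximizer:
  fixes F :: "('z \<Rightarrow> real) set"
  assumes "F \<noteq> {}" "0 < gam" "0 < del" and range: "\<And>v z. v \<in> F \<Longrightarrow> 0 \<le> v z \<and> v z \<le> 1"
  shows "\<exists>v\<in>F. \<forall>u\<in>F. log_potential mu S gam u \<le> log_potential mu S gam v + del"
proof -
  let ?Phi = "log_potential mu S gam"
  have "?Phi u \<le> (\<Sum>z\<in>S. pmf mu z * ln (1 + gam))" if "u \<in> F" for u
    unfolding log_potential_def
  proof (intro sum_mono mult_left_mono)
    fix z
    show "ln (u z + gam) \<le> ln (1 + gam)" using range[OF that, of z] assms(2) by simp
  qed simp
  then have "bdd_above (?Phi ` F)" by (rule bdd_aboveI2)
  moreover have "Sup (?Phi ` F) - del < Sup (?Phi ` F)" using assms(3) by simp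
  ultimately obtain v where "v \<in> F" "Sup (?Phi ` F) - del < ?Phi v"
    using less_cSup_iff[of "?Phi ` F"] assms(1) by auto
  moreover have "?Phi u \<le> Sup (?Phi ` F)" if "u \<in> F" for u
    using \<open>bdd_above (?Phi ` F)\<close> that by (auto intro: cSup_upper)
  ultimately show ?thesis by force
qed

lemma cover_integral_le_of_near_optimal:
  fixes v w :: "'z \<Rightarrow> real" and gam :: real
  assumes "finite S" "0 < gam" "0 < t" "t \<le> 1/2" "t \<le> eps" "0 \<le> C"
    and v_nonneg: "\<And>z. 0 \<le> v z" and w_nonneg: "\<And>z. 0 \<le> w z"
    and w_le: "\<And>z. w z \<le> C * pmf mu z"
    and opt: "log_potential mu S gam (\<lambda>z. (1 - t) * v z + t * w z) \<le> log_potential mu S gam v + t\<^sup>2"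
  shows "(\<integral>\<^sup>+z. ennreal (w z * (w z / (v z + eps * w z))) \<partial>count_space UNIV)
    \<le> ennreal (C * (1 + 3 * t) + card S * gam / eps\<^sup>2 + C / eps * measure_pmf.prob mu (UNIV - S))"
proof -
  define u where "u z = (1 - t) * v z + t * w z + gam" for z
  define g where "g z = C * (pmf mu z * w z / u z) + gam / eps\<^sup>2" for z
  have "0 < eps" using assms by simp
  have u_pos: "0 < u z" for z
    using assms(2-4) v_nonneg[of z] w_nonneg[of z] unfolding u_def by (simp add: add_nonneg_pos)
  have g_nonneg: "0 \<le> g z" for z
    using u_pos[of z] w_nonneg[of z] \<open>0 \<le> C\<close> \<open>0 < gam\<close> unfolding g_def
    by (intro add_nonneg_nonneg mult_nonneg_nonneg divide_nonneg_nonneg) simp_all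
  have "(\<Sum>z\<in>S. pmf mu z * w z / u z) \<le> t\<^sup>2 / t + 1 / (1 - t)"
    unfolding u_def using assms v_nonneg w_nonneg by (intro log_potential_first_order) auto
  also have "\<dots> \<le> 1 + 3 * t"
    using assms(3,4) by (simp add: power2_eq_square field_simps)
  finally have first_order: "(\<Sum>z\<in>S. pmf mu z * w z / u z) \<le> 1 + 3 * t" .
  have pointwise: "ennreal (w z * (w z / (v z + eps * w z)))
      \<le> ennreal (g z) * indicator S z + ennreal (C / eps) * (ennreal (pmf mu z) * indicator (UNIV - S) z)"
    for z
  proof (cases "z \<in> S")
    case True
    have "w z * (w z / (v z + eps * w z)) \<le> w z * w z / u z + gam / eps\<^sup>2"
      unfolding u_def using assms v_nonneg w_nonneg by (intro regularised_ratio_le) auto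
    also have "w z * w z \<le> C * (pmf mu z * w z)"
      using mult_right_mono[OF w_le[of z] w_nonneg[of z]] by (simp add: mult.assoc)
    then have "w z * w z / u z \<le> C * (pmf mu z * w z / u z)"
      using u_pos[of z] by (simp add: divide_right_mono)
    finally show ?thesis using True by (simp add: g_def ennreal_leI)
  next
    case False
    have "w z * (w z / (v z + eps * w z)) \<le> w z / eps"
      using v_nonneg w_nonneg \<open>0 < eps\<close> by (rule ratio_le_divide_eps)
    also have "\<dots> \<le> C / eps * pmf mu z"
      using w_le[of z] \<open>0 < eps\<close> by (simp add: divide_right_mono)
    finally show ?thesis using False \<open>0 \<le> C\<close> \<open>0 < eps\<close> by (simp add: ennreal_mult'[symmetric])
  qed
  have "(\<integral>\<^sup>+z. ennreal (w z * (w z / (v z + eps * w z))) \<partial>count_space UNIV)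
      \<le> (\<integral>\<^sup>+z. ennreal (g z) * indicator S z
           + ennreal (C / eps) * (ennreal (pmf mu z) * indicator (UNIV - S) z) \<partial>count_space UNIV)"
    by (intro nn_integral_mono pointwise)
  also have "\<dots> = (\<integral>\<^sup>+z. ennreal (g z) * indicator S z \<partial>count_space UNIV)
      + ennreal (C / eps) * (\<integral>\<^sup>+z. ennreal (pmf mu z) * indicator (UNIV - S) z \<partial>count_space UNIV)"
    by (simp add: nn_integral_add nn_integral_cmult)
  also have "(\<integral>\<^sup>+z. ennreal (g z) * indicator S z \<partial>count_space UNIV) = ennreal (\<Sum>z\<in>S. g z)"
    using assms(1) g_nonneg by (simp add: nn_integral_indicator_finite)
  also have "(\<integral>\<^sup>+z. ennreal (pmf mu z) * indicator (UNIV - S) z \<partial>count_space UNIV)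
      = ennreal (measure_pmf.prob mu (UNIV - S))"
    by (simp add: nn_integral_measure_pmf[symmetric] measure_pmf.emeasure_eq_measure)
  also have "ennreal (\<Sum>z\<in>S. g z) + ennreal (C / eps) * ennreal (measure_pmf.prob mu (UNIV - S))
      = ennreal ((\<Sum>z\<in>S. g z) + C / eps * measure_pmf.prob mu (UNIV - S))"
    using \<open>0 \<le> C\<close> \<open>0 < eps\<close> g_nonneg by (simp add: ennreal_plus ennreal_mult'[symmetric] sum_nonneg)
  also have "\<dots> \<le> ennreal (C * (1 + 3 * t) + card S * gam / eps\<^sup>2 + C / eps * measure_pmf.prob mu (UNIV - S))"
  proof (rule ennreal_leI)
    have "(\<Sum>z\<in>S. g z) = C * (\<Sum>z\<in>S. pmf mu z * w z / u z) + card S * gam / eps\<^sup>2"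
      unfolding g_def by (simp add: sum.distrib sum_distrib_left)
    also have "\<dots> \<le> C * (1 + 3 * t) + card S * gam / eps\<^sup>2"
      using first_order \<open>0 \<le> C\<close> by (simp add: mult_left_mono)
    finally show "(\<Sum>z\<in>S. g z) + C / eps * measure_pmf.prob mu (UNIV - S)
        \<le> C * (1 + 3 * t) + card S * gam / eps\<^sup>2 + C / eps * measure_pmf.prob mu (UNIV - S)"
      by simp
  qed
  finally show ?thesis .
qed

lemma exists_cover_of_dominated:
  fixes F W :: "('z \<Rightarrow> real) set"
  assumes mix: "\<And>u v t. u \<in> F \<Longrightarrow> v \<in> F \<Longrightarrow> 0 \<le> t \<Longrightarrow> t \<le> 1 \<Longrightarrow> (\<lambda>z. (1 - t) * u z + t * v z) \<in> F"
    and "F \<noteq> {}" and range: "\<And>v z. v \<in> F \<Longrightarrow> 0 \<le> v z \<and> v z \<le> 1"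
    and "W \<subseteq> F" and dom: "\<And>w z. w \<in> W \<Longrightarrow> w z \<le> C * pmf mu z"
    and "0 \<le> C" "0 < eps" "0 < xi"
  shows "\<exists>v\<in>F. \<forall>w\<in>W. (\<integral>\<^sup>+z. ennreal (w z * (w z / (v z + eps * w z))) \<partial>count_space UNIV) \<le> ennreal (C + xi)"
proof -
  \<comment> \<open>S, gam and t are chosen so that each error term in the bound of
    cover_integral_le_of_near_optimal is at most xi / 3.\<close>
  obtain S where "finite S" and tail: "measure_pmf.prob mu (UNIV - S) \<le> eps * (xi / 3 / (C + 1))"
    using measure_pmf_finite_tail_le[of "eps * (xi / 3 / (C + 1))"] assms(6-8) by auto
  define gam where "gam = eps\<^sup>2 * (xi / 3 / (real (card S) + 1))"
  define t where "t = min (min eps (1/2)) (xi / 9 / (C + 1))"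
  have "0 < gam" "0 < t" using assms(6-8) by (simp_all add: gam_def t_def)
  have "t \<le> 1/2" "t \<le> eps" "t \<le> xi / 9 / (C + 1)" unfolding t_def by linarith+
  have "0 < t\<^sup>2" using \<open>0 < t\<close> by simp
  then obtain v where "v \<in> F" and opt: "\<forall>u\<in>F. log_potential mu S gam u \<le> log_potential mu S gam v + t\<^sup>2"
    using log_potential_near_maximizer[of F gam "t\<^sup>2" mu S] \<open>F \<noteq> {}\<close> \<open>0 < gam\<close> range by blast
  have "C * t \<le> C * (xi / 9 / (C + 1))"
    using \<open>t \<le> xi / 9 / (C + 1)\<close> \<open>0 \<le> C\<close> by (rule mult_left_mono)
  also have "\<dots> \<le> xi / 9" using assms(6,8) by (intro mult_divide_add_one_le) auto
  finally have "C * (1 + 3 * t) \<le> C + xi / 3" by (simp add: algebra_simps)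
  moreover have "card S * gam / eps\<^sup>2 = card S * (xi / 3 / (real (card S) + 1))"
    using assms(7) by (simp add: gam_def)
  moreover have "\<dots> \<le> xi / 3" using assms(8) by (intro mult_divide_add_one_le) auto
  moreover have "C / eps * measure_pmf.prob mu (UNIV - S) \<le> C / eps * (eps * (xi / 3 / (C + 1)))"
    using tail assms(6,7) by (intro mult_left_mono) auto
  moreover have "\<dots> = C * (xi / 3 / (C + 1))" using assms(7) by simp
  moreover have "\<dots> \<le> xi / 3" using assms(6,8) by (intro mult_divide_add_one_le) auto
  ultimately have budget:
    "C * (1 + 3 * t) + card S * gam / eps\<^sup>2 + C / eps * measure_pmf.prob mu (UNIV - S) \<le> C + xi"
    by linarith
  show ?thesis
  proof (intro bexI ballI)
    fix w assume "w \<in> W"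
    then have "w \<in> F" using \<open>W \<subseteq> F\<close> by auto
    have "(\<integral>\<^sup>+z. ennreal (w z * (w z / (v z + eps * w z))) \<partial>count_space UNIV)
        \<le> ennreal (C * (1 + 3 * t) + card S * gam / eps\<^sup>2 + C / eps * measure_pmf.prob mu (UNIV - S))"
    proof (rule cover_integral_le_of_near_optimal)
      show "log_potential mu S gam (\<lambda>z. (1 - t) * v z + t * w z) \<le> log_potential mu S gam v + t\<^sup>2"
        using opt mix[OF \<open>v \<in> F\<close> \<open>w \<in> F\<close>] \<open>0 < t\<close> \<open>t \<le> 1/2\<close> by simp
    qed (use \<open>finite S\<close> \<open>0 < gam\<close> \<open>0 < t\<close> \<open>t \<le> 1/2\<close> \<open>t \<le> eps\<close> \<open>0 \<le> C\<close>
           range[OF \<open>v \<in> F\<close>] range[OF \<open>w \<in> F\<close>] dom[OF \<open>w \<in> W\<close>] in auto)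
    also have "\<dots> \<le> ennreal (C + xi)" using budget by (rule ennreal_leI)
    finally show "(\<integral>\<^sup>+z. ennreal (w z * (w z / (v z + eps * w z))) \<partial>count_space UNIV) \<le> ennreal (C + xi)" .
  qed (rule \<open>v \<in> F\<close>)
qed

lemma occd_mix_eq_pmf_bind: "occd_mix M p h z = pmf (bind_pmf p (\<lambda>pol. occ M pol h)) z"
  by (simp add: occd_mix_def occd_def pmf_bind)

lemma occd_mix_mix_pmf:
  assumes "0 \<le> t" "t \<le> 1"
  shows "occd_mix M (mix_pmf t p q) h = (\<lambda>z. (1 - t) * occd_mix M p h z + t * occd_mix M q h z)"
  using assms by (simp add: fun_eq_iff occd_mix_eq_pmf_bind mix_pmf_def bind_assoc_pmf pmf_bind if_distrib)

lemma occd_mix_return_pmf: "occd_mix M (return_pmf pol) h = occd M pol h"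
  by (simp add: occd_mix_def fun_eq_iff)

lemma Psi_eq_SUP_count_space:
  "Psi M Pis h eps p = (SUP pol\<in>Pis. \<integral>\<^sup>+z. ennreal (occd M pol h z *
      (occd M pol h z / (occd_mix M p h z + eps * occd M pol h z))) \<partial>count_space UNIV)"
  unfolding Psi_def nn_integral_measure_pmf
  by (intro SUP_cong nn_integral_cong refl) (simp add: occd_def ennreal_mult'[symmetric])

definition occupancies :: "('x, 'a) mdp \<Rightarrow> ('x, 'a) policy set \<Rightarrow> nat \<Rightarrow> ('x \<times> 'a \<Rightarrow> real) set" where
  "occupancies M Pis h = (\<lambda>p. occd_mix M p h) ` {p. set_pmf p \<subseteq> Pis}"

lemma occd_in_occupancies: "pol \<in> Pis \<Longrightarrow> occd M pol h \<in> occupancies M Pis h"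
  unfolding occupancies_def occd_mix_return_pmf[symmetric] by (intro imageI) simp

lemma occupancies_convex:
  assumes "u \<in> occupancies M Pis h" "v \<in> occupancies M Pis h" "0 \<le> t" "t \<le> 1"
  shows "(\<lambda>z. (1 - t) * u z + t * v z) \<in> occupancies M Pis h"
proof -
  obtain p q where p: "set_pmf p \<subseteq> Pis" and q: "set_pmf q \<subseteq> Pis"
    and "u = occd_mix M p h" "v = occd_mix M q h"
    using assms(1,2) unfolding occupancies_def by auto
  then have "(\<lambda>z. (1 - t) * u z + t * v z) = occd_mix M (mix_pmf t p q) h"
    using occd_mix_mix_pmf[OF assms(3,4), of M p q h] by simp
  moreover have "set_pmf (mix_pmf t p q) \<subseteq> Pis" using set_mix_pmf[of t p q] p q by blast
  ultimately show ?thesis unfolding occupancies_def by simp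
qed

lemma occupancies_range: "v \<in> occupancies M Pis h \<Longrightarrow> 0 \<le> v z \<and> v z \<le> 1"
  unfolding occupancies_def by (auto simp: occd_mix_eq_pmf_bind pmf_le_1)

lemma Cov_le_of_occd_le:
  assumes "Pis \<noteq> {}" "0 < eps" "0 \<le> C"
    and dom: "\<And>pol z. pol \<in> Pis \<Longrightarrow> occd M pol h z \<le> C * pmf mu z"
  shows "Cov M Pis h eps \<le> ennreal C"
proof (rule ennreal_le_epsilon)
  fix xi :: real assume "0 < xi"
  let ?F = "occupancies M Pis h"
  define W where "W = (\<lambda>pol. occd M pol h) ` Pis"
  have "W \<subseteq> ?F" unfolding W_def using occd_in_occupancies by blast
  have "\<exists>v\<in>?F. \<forall>w\<in>W. (\<integral>\<^sup>+z. ennreal (w z * (w z / (v z + eps * w z))) \<partial>count_space UNIV) \<le> ennreal (C + xi)"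
  proof (rule exists_cover_of_dominated)
    show "(\<lambda>z. (1 - t) * u z + t * v z) \<in> ?F" if "u \<in> ?F" "v \<in> ?F" "0 \<le> t" "t \<le> 1"
      for u v and t :: real
      using that by (rule occupancies_convex)
    show "0 \<le> v z \<and> v z \<le> 1" if "v \<in> ?F" for v z
      using that by (rule occupancies_range)
    show "?F \<noteq> {}" using \<open>W \<subseteq> ?F\<close> assms(1) unfolding W_def by auto
    show "w z \<le> C * pmf mu z" if "w \<in> W" for w z
      using that dom unfolding W_def by blast
  qed (use \<open>W \<subseteq> ?F\<close> assms(2,3) \<open>0 < xi\<close> in simp_all)
  then obtain p where p: "set_pmf p \<subseteq> Pis" and p_bound: "\<forall>w\<in>W.
      (\<integral>\<^sup>+z. ennreal (w z * (w z / (occd_mix M p h z + eps * w z))) \<partial>count_space UNIV) \<le> ennreal (C + xi)"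
    unfolding occupancies_def by blast
  have "Cov M Pis h eps \<le> Psi M Pis h eps p"
    unfolding Cov_def using p by (intro INF_lower) simp
  also have "\<dots> \<le> ennreal (C + xi)"
    unfolding Psi_eq_SUP_count_space using p_bound unfolding W_def by (intro SUP_least) simp
  finally show "Cov M Pis h eps \<le> ennreal C + ennreal xi"
    using assms(3) \<open>0 < xi\<close> by (simp add: ennreal_plus)
qed

theorem proposition3p2:
  fixes M :: "('x :: countable, 'a) mdp"
    and Pis :: "('x, 'a) policy set"
    and H h :: nat and eps :: real
  assumes "Pis \<noteq> {}"
    and "1 \<le> h" and "h \<le> H"
    and "eps > 0"
  shows "Cov M Pis h eps \<le> Cinf M Pis h"
  unfolding Cinf_def
proof (rule INF_greatest)
  fix mu :: "('x \<times> 'a) pmf"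
  let ?K = "SUP pol\<in>Pis. SUP z. ennreal (occd M pol h z) / ennreal (pmf mu z)"
  show "Cov M Pis h eps \<le> ?K"
  proof (cases ?K rule: ennreal_cases)
    case (real C)
    have "occd M pol h z \<le> C * pmf mu z" if "pol \<in> Pis" for pol z
    proof (rule le_mult_of_ennreal_divide_le)
      show "ennreal (occd M pol h z) / ennreal (pmf mu z) \<le> ennreal C"
        unfolding real(2)[symmetric] by (rule SUP_upper2[OF that SUP_upper[OF UNIV_I]])
    qed (simp_all add: occd_def real(1))
    then show ?thesis unfolding real(2) by (rule Cov_le_of_occd_le[OF assms(1,4) real(1)])
  qed (simp only: top_greatest)
qed

end
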